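(* Let $\Gamma$ be a countable group with a covering family $\mathcal E$ of malnormal subgroups and $\alpha>0$ such that $\Gamma$ satisfies $\mathbf K\geq_{\text{local}}\alpha$ relatively to $\mathcal E$. There exists $\bar\delta=\bar\delta(\alpha)>0$ such that for any path connected component $R$ of $[\mathcal S^*(\Gamma)/\Gamma]^{\leq\bar\delta}$ and any base point $r_0\in R$, there is $H_R\in\mathcal E$ such that $\iota_*(\pi_1(R,r_0))$ is a subgroup of $H_R$, where $\iota:R\to\mathcal S^*(\Gamma)/\Gamma$ is the inclusion and $\pi_1(\mathcal S^*(\Gamma)/\Gamma,\iota(r_0))$ is identified with $\Gamma$ (by a fixed identification, well defined up to conjugacy).
   Context: Let $\mathbf H$ be the separable infinite-dimensional real Hilbert space; $\mathcal S(\Gamma)$ is the unit sphere of $\ell^2(\Gamma,\mathbf H)$ with $\Gamma$ acting by $(\gamma.f)(x)=f(\gamma^{-1}x)$, $\mathcal S^*(\Gamma)=\{f:\gamma.f\ne f\ \forall\gamma\neq e\}$, and $\mathcal S^*(\Gamma)/\Gamma$ (quotient $\ell^2$ metric) is a classifying space for $\Gamma$, so its fundamental group is isomorphic to $\Gamma$. Thin part: with $\Pi$ the projection and $\mathbf d$ the $\ell^2$ distance, $[\mathcal S^*(\Gamma)/\Gamma]^{\leq\delta}=\Pi(\{x\in\mathcal S^*(\Gamma):\mathbf d(x,\gamma.x)\le\delta\text{ for some }\gamma\in\Gamma\setminus\{e\}\})$. For a group $G$ with regular representation $\rho_G$ on $\ell^2(G)$ and finite $S\subset G$, $\mathbf K(\rho_G,G,S)=\inf_{u\neq0}\max_{s\in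 S}\|s.u-u\|_{\ell^2}/\|u\|_{\ell^2}$. A subgroup $H$ is malnormal if $gHg^{-1}\cap H=\{e\}$ for $g\notin H$; $\mathcal E$ is covering if every element of $\Gamma$ lies in some member of $\mathcal E$; $\Gamma$ satisfies $\mathbf K\geq_{\text{local}}\alpha$ relatively to $\mathcal E$ if $\mathbf K(\rho_{\langle x,y\rangle},\langle x,y\rangle,\{x,y\})\geq\alpha$ whenever $H\in\mathcal E$, $x\in H\setminus\{e\}$, $y\notin H$. *)

theory Defs
  imports "HOL-Analysis.Analysis" "HOL-Algebra.Generated_Groups"
begin

(* A countable group Gamma is represented (up to isomorphism) by a HOL-Algebra group
   whose carrier is a subset of nat. The separable infinite-dimensional real Hilbert
   space H is represented concretely as l^2(nat), so that an element f of l^2(Gamma,H)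
   is a function f :: nat => nat => real, f x n being the n-th coordinate of f(x),
   vanishing for x outside the carrier. *)

definition L2 :: "nat monoid \<Rightarrow> (nat \<Rightarrow> nat \<Rightarrow> real) set" where
  "L2 G = {f. (\<forall>x n. x \<notin> carrier G \<longrightarrow> f x n = 0) \<and>
              (\<lambda>(x, n). (f x n)\<^sup>2) summable_on (carrier G \<times> UNIV)}"

definition l2norm :: "nat monoid \<Rightarrow> (nat \<Rightarrow> nat \<Rightarrow> real) \<Rightarrow> real" where
  "l2norm G f = sqrt (\<Sum>\<^sub>\<infinity>(x, n)\<in>carrier G \<times> UNIV. (f x n)\<^sup>2)"

definition l2dist :: "nat monoid \<Rightarrow> (nat \<Rightarrow> nat \<Rightarrow> real) \<Rightarrow> (nat \<Rightarrow> nat \<Rightarrow> real) \<Rightarrow> real" where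
  "l2dist G f g = sqrt (\<Sum>\<^sub>\<infinity>(x, n)\<in>carrier G \<times> UNIV. (f x n - g x n)\<^sup>2)"

definition act :: "nat monoid \<Rightarrow> nat \<Rightarrow> (nat \<Rightarrow> nat \<Rightarrow> real) \<Rightarrow> (nat \<Rightarrow> nat \<Rightarrow> real)" where
  "act G \<gamma> f = (\<lambda>x n. if x \<in> carrier G then f (inv\<^bsub>G\<^esub> \<gamma> \<otimes>\<^bsub>G\<^esub> x) n else 0)"

definition Sph :: "nat monoid \<Rightarrow> (nat \<Rightarrow> nat \<Rightarrow> real) set" where
  "Sph G = {f \<in> L2 G. l2norm G f = 1}"

definition SphStar :: "nat monoid \<Rightarrow> (nat \<Rightarrow> nat \<Rightarrow> real) set" where
  "SphStar G = {f \<in> Sph G. \<forall>\<gamma>\<in>carrier G. \<gamma> \<noteq> \<one>\<^bsub>G\<^esub> \<longrightarrow> act G \<gamma> f \<noteq> f}"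

definition orb :: "nat monoid \<Rightarrow> (nat \<Rightarrow> nat \<Rightarrow> real) \<Rightarrow> (nat \<Rightarrow> nat \<Rightarrow> real) set" where
  "orb G f = (\<lambda>\<gamma>. act G \<gamma> f) ` carrier G"

definition Quot :: "nat monoid \<Rightarrow> (nat \<Rightarrow> nat \<Rightarrow> real) set set" where
  "Quot G = orb G ` SphStar G"

definition qdist :: "nat monoid \<Rightarrow> (nat \<Rightarrow> nat \<Rightarrow> real) set \<Rightarrow> (nat \<Rightarrow> nat \<Rightarrow> real) set \<Rightarrow> real" where
  "qdist G A B = Inf {l2dist G f g | f g. f \<in> A \<and> g \<in> B}"

definition STop :: "nat monoid \<Rightarrow> (nat \<Rightarrow> nat \<Rightarrow> real) topology" where
  "STop G = Metric_space.mtopology (SphStar G) (l2dist G)"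

definition QTop :: "nat monoid \<Rightarrow> (nat \<Rightarrow> nat \<Rightarrow> real) set topology" where
  "QTop G = Metric_space.mtopology (Quot G) (qdist G)"

definition thin :: "nat monoid \<Rightarrow> real \<Rightarrow> (nat \<Rightarrow> nat \<Rightarrow> real) set set" where
  "thin G \<delta> = orb G ` {x \<in> SphStar G. \<exists>\<gamma>\<in>carrier G - {\<one>\<^bsub>G\<^esub>}. l2dist G x (act G \<gamma> x) \<le> \<delta>}"

text \<open>K(rho_L, L, S) for the (real) regular representation of a subgroup L of G on l^2(L).\<close>
definition Kreg :: "nat monoid \<Rightarrow> nat set \<Rightarrow> nat set \<Rightarrow> real" where
  "Kreg G L S = Inf {Max ((\<lambda>s. sqrt (\<Sum>\<^sub>\<infinity>x\<in>L. (u (inv\<^bsub>G\<^esub> s \<otimes>\<^bsub>G\<^esub> x) - u x)\<^sup>2)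
                                   / sqrt (\<Sum>\<^sub>\<infinity>x\<in>L. (u x)\<^sup>2)) ` S)
                     | u. (\<forall>x. x \<notin> L \<longrightarrow> u x = 0) \<and> (\<lambda>x. (u x)\<^sup>2) summable_on L
                          \<and> (\<exists>x\<in>L. u x \<noteq> 0)}"

definition malnormal :: "nat monoid \<Rightarrow> nat set \<Rightarrow> bool" where
  "malnormal G H \<longleftrightarrow> (\<forall>g\<in>carrier G - H.
      {g \<otimes>\<^bsub>G\<^esub> h \<otimes>\<^bsub>G\<^esub> inv\<^bsub>G\<^esub> g | h. h \<in> H} \<inter> H = {\<one>\<^bsub>G\<^esub>})"

definition covering :: "nat monoid \<Rightarrow> nat set set \<Rightarrow> bool" where
  "covering G E \<longleftrightarrow> (\<forall>g\<in>carrier G. \<exists>H\<in>E. g \<in> H)"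

definition K_local_ge :: "nat monoid \<Rightarrow> nat set set \<Rightarrow> real \<Rightarrow> bool" where
  "K_local_ge G E \<alpha> \<longleftrightarrow> (\<forall>H\<in>E. \<forall>x\<in>H - {\<one>\<^bsub>G\<^esub>}. \<forall>y\<in>carrier G - H.
      Kreg G (generate G {x, y}) {x, y} \<ge> \<alpha>)"

end

theory Submission
  imports Defs
begin

(* A Kazhdan-type bound K >= alpha for the regular representation of <a, b> passes to
   l2(Gamma, H): restricted to <a, b>, this space splits along the right cosets of <a, b> and
   the coordinates of the Hilbert space H into copies of the regular representation. Hence no
   unit vector is moved by less than alpha/2 both by some a in S - {1} and by some b outside S,
   for any S in E. In the (alpha/4)-thin part every point is moved at most alpha/4 by some
   nontrivial element, so along a lift q of a path in the thin part, by connectedness of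
   [0, 1], the member S of E containing a short element gamma0 at x0 = q 0 contains a short
   element at every time. At q 1 = gamma x0 the conjugate gamma gamma0 gamma^-1 is short too,
   hence lies in S, and malnormality of S forces gamma in S. *)

section \<open>Square-summable families\<close>

lemma summable_on_square_diff:
  fixes f g :: "'a \<Rightarrow> real"
  assumes "(\<lambda>i. (f i)\<^sup>2) summable_on A" "(\<lambda>i. (g i)\<^sup>2) summable_on A"
  shows "(\<lambda>i. (f i - g i)\<^sup>2) summable_on A"
proof (rule summable_on_comparison_test)
  show "(\<lambda>i. 2 * (f i)\<^sup>2 + 2 * (g i)\<^sup>2) summable_on A"
    using assms by (intro summable_on_add summable_on_cmult_right)
  show "(f i - g i)\<^sup>2 \<le> 2 * (f i)\<^sup>2 + 2 * (g i)\<^sup>2" for i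
    using zero_le_power2[of "f i + g i"] by (simp add: power2_eq_square algebra_simps)
qed simp

lemma sqrt_infsum_square_diff_triangle:
  fixes f g h :: "'a \<Rightarrow> real"
  assumes f: "(\<lambda>i. (f i)\<^sup>2) summable_on A" and g: "(\<lambda>i. (g i)\<^sup>2) summable_on A"
    and h: "(\<lambda>i. (h i)\<^sup>2) summable_on A"
  shows "sqrt (\<Sum>\<^sub>\<infinity>i\<in>A. (f i - h i)\<^sup>2)
           \<le> sqrt (\<Sum>\<^sub>\<infinity>i\<in>A. (f i - g i)\<^sup>2) + sqrt (\<Sum>\<^sub>\<infinity>i\<in>A. (g i - h i)\<^sup>2)"
    (is "_ \<le> ?R")
proof -
  have fg: "(\<lambda>i. (f i - g i)\<^sup>2) summable_on A" and gh: "(\<lambda>i. (g i - h i)\<^sup>2) summable_on A"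
    and fh: "(\<lambda>i. (f i - h i)\<^sup>2) summable_on A"
    using f g h by (auto intro: summable_on_square_diff)
  have R_nonneg: "0 \<le> ?R" by (intro add_nonneg_nonneg real_sqrt_ge_zero infsum_nonneg) auto
  have "(\<Sum>\<^sub>\<infinity>i\<in>A. (f i - h i)\<^sup>2) \<le> ?R\<^sup>2"
  proof (rule infsum_le_finite_sums[OF fh])
    fix F assume F: "finite F" "F \<subseteq> A"
    have "L2_set (\<lambda>i. f i - h i) F \<le> L2_set (\<lambda>i. f i - g i) F + L2_set (\<lambda>i. g i - h i) F"
      using L2_set_triangle_ineq[of "\<lambda>i. f i - g i" "\<lambda>i. g i - h i" F] by simp
    also have "\<dots> \<le> ?R"
      unfolding L2_set_def
      by (intro add_mono real_sqrt_le_mono finite_sum_le_infsum[OF fg F] finite_sum_le_infsum[OF gh F]) auto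
    finally have "sqrt (\<Sum>i\<in>F. (f i - h i)\<^sup>2) \<le> ?R" unfolding L2_set_def .
    then have "(sqrt (\<Sum>i\<in>F. (f i - h i)\<^sup>2))\<^sup>2 \<le> ?R\<^sup>2"
      by (rule power_mono) (simp_all add: sum_nonneg)
    then show "(\<Sum>i\<in>F. (f i - h i)\<^sup>2) \<le> ?R\<^sup>2"
      by (simp add: sum_nonneg)
  qed
  then show ?thesis
    using R_nonneg real_sqrt_le_mono by fastforce
qed

lemma infsum_partition:
  fixes f :: "'a \<Rightarrow> 'b::banach"
  assumes f: "f summable_on A" and cover: "\<Union>P = A" and disj: "pairwise disjnt P"
  shows "infsum f A = (\<Sum>\<^sub>\<infinity>C\<in>P. infsum f C)" and "(\<lambda>C. infsum f C) summable_on P"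
proof -
  have inj: "inj_on snd (Sigma P (\<lambda>C. C))"
  proof (rule inj_onI, clarsimp)
    fix C C' x assume "C \<in> P" "x \<in> C" "C' \<in> P" "x \<in> C'"
    then show "C = C'" using disj unfolding pairwise_def disjnt_def by blast
  qed
  have image: "snd ` Sigma P (\<lambda>C. C) = A"
  proof
    show "snd ` Sigma P (\<lambda>C. C) \<subseteq> A" using cover by auto
    show "A \<subseteq> snd ` Sigma P (\<lambda>C. C)"
    proof
      fix x assume "x \<in> A"
      then obtain C where "C \<in> P" "x \<in> C" using cover by blast
      then show "x \<in> snd ` Sigma P (\<lambda>C. C)" by (intro image_eqI[of _ _ "(C, x)"]) auto
    qed
  qed
  have sum: "(f \<circ> snd) summable_on Sigma P (\<lambda>C. C)"
    using summable_on_reindex[OF inj, of f] f image by simp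
  show "infsum f A = (\<Sum>\<^sub>\<infinity>C\<in>P. infsum f C)"
    using infsum_Sigma_banach[OF sum] infsum_reindex[OF inj, of f] image by (simp add: o_def)
  show "(\<lambda>C. infsum f C) summable_on P"
    using summable_on_Sigma_banach[of "\<lambda>C x. f x" P "\<lambda>C. C"] sum by (simp add: o_def case_prod_unfold)
qed

lemma infsum_Times_iterated:
  fixes F :: "'a \<times> 'b \<Rightarrow> 'c::banach"
  assumes "F summable_on A \<times> B"
  shows "infsum F (A \<times> B) = (\<Sum>\<^sub>\<infinity>y\<in>B. \<Sum>\<^sub>\<infinity>x\<in>A. F (x, y))"
    and "(\<lambda>y. \<Sum>\<^sub>\<infinity>x\<in>A. F (x, y)) summable_on B"
    and "y \<in> B \<Longrightarrow> (\<lambda>x. F (x, y)) summable_on A"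
proof -
  have swap: "prod.swap ` (B \<times> A) = A \<times> B" by auto
  have eq: "(\<lambda>(y, x). F (x, y)) = F \<circ> prod.swap" by auto
  have sum: "(\<lambda>(y, x). F (x, y)) summable_on B \<times> A"
    unfolding eq using summable_on_reindex[of prod.swap "B \<times> A" F] assms swap by simp
  show "infsum F (A \<times> B) = (\<Sum>\<^sub>\<infinity>y\<in>B. \<Sum>\<^sub>\<infinity>x\<in>A. F (x, y))"
    using infsum_Sigma'_banach[OF sum] infsum_reindex[of prod.swap "B \<times> A" F] swap eq by simp
  show "(\<lambda>y. \<Sum>\<^sub>\<infinity>x\<in>A. F (x, y)) summable_on B"
    using summable_on_Sigma_banach[OF sum] .
  show "(\<lambda>x. F (x, y)) summable_on A" if "y \<in> B"
  proof -
    have "F summable_on (\<lambda>x. (x, y)) ` A"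
      by (rule summable_on_subset_banach[OF assms]) (use that in auto)
    then show ?thesis
      using summable_on_reindex[of "\<lambda>x. (x, y)" A F] by (simp add: inj_on_def o_def)
  qed
qed

section \<open>The translation action on l2(Gamma, H)\<close>

lemma bij_betw_left_mult:
  assumes "group G" "b \<in> carrier G"
  shows "bij_betw (\<lambda>x. b \<otimes>\<^bsub>G\<^esub> x) (carrier G) (carrier G)"
proof -
  interpret group G by fact
  show ?thesis
    by (rule bij_betw_byWitness[where f'="\<lambda>x. inv\<^bsub>G\<^esub> b \<otimes>\<^bsub>G\<^esub> x"])
      (auto simp: assms m_assoc[symmetric])
qed

lemma infsum_left_translate:
  fixes F :: "nat \<times> 'b \<Rightarrow> real"
  assumes "group G" "b \<in> carrier G"
  shows "(\<Sum>\<^sub>\<infinity>(x, n)\<in>carrier G \<times> B. F (b \<otimes>\<^bsub>G\<^esub> x, n)) = infsum F (carrier G \<times> B)"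
    and "(\<lambda>(x, n). F (b \<otimes>\<^bsub>G\<^esub> x, n)) summable_on carrier G \<times> B \<longleftrightarrow> F summable_on carrier G \<times> B"
proof -
  have bij: "bij_betw (map_prod (\<lambda>x. b \<otimes>\<^bsub>G\<^esub> x) id) (carrier G \<times> B) (carrier G \<times> B)"
    using bij_betw_map_prod[OF bij_betw_left_mult[OF assms] bij_betw_id] .
  have eq: "(\<lambda>(x, n). F (b \<otimes>\<^bsub>G\<^esub> x, n)) = (\<lambda>z. F (map_prod (\<lambda>x. b \<otimes>\<^bsub>G\<^esub> x) id z))"
    by auto
  show "(\<Sum>\<^sub>\<infinity>(x, n)\<in>carrier G \<times> B. F (b \<otimes>\<^bsub>G\<^esub> x, n)) = infsum F (carrier G \<times> B)"
    unfolding eq by (rule infsum_reindex_bij_betw[OF bij])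
  show "(\<lambda>(x, n). F (b \<otimes>\<^bsub>G\<^esub> x, n)) summable_on carrier G \<times> B \<longleftrightarrow> F summable_on carrier G \<times> B"
    unfolding eq by (rule summable_on_reindex_bij_betw[OF bij])
qed

lemma act_apply: "x \<in> carrier G \<Longrightarrow> act G b f x n = f (inv\<^bsub>G\<^esub> b \<otimes>\<^bsub>G\<^esub> x) n"
  by (simp add: act_def)

lemma act_act:
  assumes "group G" "a \<in> carrier G" "b \<in> carrier G"
  shows "act G a (act G b f) = act G (a \<otimes>\<^bsub>G\<^esub> b) f"
proof -
  interpret group G by fact
  show ?thesis unfolding act_def
    by (intro ext) (auto simp: assms inv_mult_group m_assoc)
qed

lemma act_one:
  assumes "group G" "f \<in> L2 G"
  shows "act G \<one>\<^bsub>G\<^esub> f = f"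
proof -
  interpret group G by fact
  show ?thesis using assms(2) unfolding act_def L2_def by (intro ext) auto
qed

lemma l2dist_act:
  assumes "group G" "b \<in> carrier G"
  shows "l2dist G (act G b f) (act G b h) = l2dist G f h"
proof -
  have "(\<Sum>\<^sub>\<infinity>(x, n)\<in>carrier G \<times> UNIV. (act G b f x n - act G b h x n)\<^sup>2)
      = (\<Sum>\<^sub>\<infinity>(x, n)\<in>carrier G \<times> UNIV. (\<lambda>(y, m). (f y m - h y m)\<^sup>2) (inv\<^bsub>G\<^esub> b \<otimes>\<^bsub>G\<^esub> x, n))"
    by (intro infsum_cong) (auto simp: act_apply)
  also have "\<dots> = (\<Sum>\<^sub>\<infinity>(y, m)\<in>carrier G \<times> UNIV. (f y m - h y m)\<^sup>2)"
    using assms by (intro infsum_left_translate(1)) auto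
  finally show ?thesis unfolding l2dist_def by simp
qed

lemma act_in_L2:
  assumes "group G" "b \<in> carrier G" "f \<in> L2 G"
  shows "act G b f \<in> L2 G"
proof -
  have "(\<lambda>(x, n). (act G b f x n)\<^sup>2) summable_on carrier G \<times> UNIV
     \<longleftrightarrow> (\<lambda>(x, n). (\<lambda>(y, m). (f y m)\<^sup>2) (inv\<^bsub>G\<^esub> b \<otimes>\<^bsub>G\<^esub> x, n)) summable_on carrier G \<times> UNIV"
    by (intro summable_on_cong) (auto simp: act_apply)
  also have "\<dots> \<longleftrightarrow> (\<lambda>(y, m). (f y m)\<^sup>2) summable_on carrier G \<times> UNIV"
    using assms by (intro infsum_left_translate(2)) auto
  finally show ?thesis using assms(3) unfolding L2_def by (auto simp: act_def)
qed

lemma summable_on_L2_diff: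
  assumes "f \<in> L2 G" "h \<in> L2 G"
  shows "(\<lambda>(x, n). (f x n - h x n)\<^sup>2) summable_on carrier G \<times> UNIV"
  using summable_on_square_diff[of "\<lambda>(x, n). f x n" "carrier G \<times> UNIV" "\<lambda>(x, n). h x n"] assms
  unfolding L2_def by (simp add: case_prod_unfold)

lemma l2dist_triangle:
  assumes "f \<in> L2 G" "g \<in> L2 G" "h \<in> L2 G"
  shows "l2dist G f h \<le> l2dist G f g + l2dist G g h"
  using sqrt_infsum_square_diff_triangle[of "\<lambda>(x, n). f x n" "carrier G \<times> UNIV"
      "\<lambda>(x, n). g x n" "\<lambda>(x, n). h x n"] assms
  unfolding l2dist_def L2_def by (simp add: case_prod_unfold)

lemma l2dist_commute: "l2dist G f g = l2dist G g f"
  unfolding l2dist_def by (simp add: power2_commute)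

lemma l2dist_nonneg: "0 \<le> l2dist G f g"
  unfolding l2dist_def by (intro real_sqrt_ge_zero infsum_nonneg) auto

lemma l2dist_eq_0_iff:
  assumes "f \<in> L2 G" "h \<in> L2 G"
  shows "l2dist G f h = 0 \<longleftrightarrow> f = h"
proof
  assume dist: "l2dist G f h = 0"
  show "f = h"
  proof (intro ext)
    fix x n
    show "f x n = h x n"
    proof (cases "x \<in> carrier G")
      case True
      have "(\<Sum>\<^sub>\<infinity>(x, n)\<in>carrier G \<times> UNIV. (f x n - h x n)\<^sup>2) \<le> 0"
        using dist unfolding l2dist_def by simp
      then have "(\<lambda>(x, n). (f x n - h x n)\<^sup>2) (x, n) = 0"
        using nonneg_infsum_le_0D[OF _ summable_on_L2_diff[OF assms]] True by force
      then show ?thesis by simp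
    next
      case False
      then show ?thesis using assms unfolding L2_def by auto
    qed
  qed
qed (simp add: l2dist_def infsum_0)

lemma Metric_space_l2dist:
  assumes "M \<subseteq> L2 G"
  shows "Metric_space M (l2dist G)"
proof
  fix x y z
  show "0 \<le> l2dist G x y" by (rule l2dist_nonneg)
  show "l2dist G x y = l2dist G y x" by (rule l2dist_commute)
  show "x \<in> M \<Longrightarrow> y \<in> M \<Longrightarrow> l2dist G x y = 0 \<longleftrightarrow> x = y"
    using assms l2dist_eq_0_iff by blast
  show "x \<in> M \<Longrightarrow> y \<in> M \<Longrightarrow> z \<in> M \<Longrightarrow> l2dist G x z \<le> l2dist G x y + l2dist G y z"
    using assms l2dist_triangle by blast
qed

abbreviation displacement :: "nat monoid \<Rightarrow> nat \<Rightarrow> (nat \<Rightarrow> nat \<Rightarrow> real) \<Rightarrow> real" where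
  "displacement G g x \<equiv> l2dist G x (act G g x)"

lemma displacement_le_add_dist:
  assumes "group G" "b \<in> carrier G" "y \<in> L2 G" "z \<in> L2 G"
  shows "displacement G b y \<le> displacement G b z + 2 * l2dist G z y"
proof -
  have act_y: "act G b y \<in> L2 G" and act_z: "act G b z \<in> L2 G" using act_in_L2 assms by auto
  have "displacement G b y \<le> l2dist G y z + l2dist G z (act G b y)"
    using l2dist_triangle assms(3,4) act_y by blast
  also have "l2dist G z (act G b y) \<le> displacement G b z + l2dist G (act G b z) (act G b y)"
    using l2dist_triangle assms(4) act_z act_y by blast
  also have "l2dist G (act G b z) (act G b y) = l2dist G z y"
    using l2dist_act assms(1,2) .
  finally show ?thesis using l2dist_commute[of G y z] by simp
qed

lemma continuous_map_displacement:
  assumes "group G" "b \<in> carrier G" "M \<subseteq> L2 G"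
  shows "continuous_map (Metric_space.mtopology M (l2dist G)) euclideanreal (\<lambda>x. displacement G b x)"
proof -
  interpret Metric_space M "l2dist G" using Metric_space_l2dist[OF assms(3)] .
  have "continuous_map mtopology Met_TC.mtopology (\<lambda>x. displacement G b x)"
    unfolding metric_continuous_map[OF Met_TC.Metric_space_axioms]
  proof (intro conjI ballI allI impI)
    fix y and \<epsilon> :: real assume y: "y \<in> M" and "\<epsilon> > 0"
    show "\<exists>\<delta>>0. \<forall>z. z \<in> M \<and> l2dist G y z < \<delta> \<longrightarrow> dist (displacement G b y) (displacement G b z) < \<epsilon>"
    proof (intro exI[of _ "\<epsilon> / 2"] conjI allI impI)
      fix z assume z: "z \<in> M \<and> l2dist G y z < \<epsilon> / 2"
      have "displacement G b y \<le> displacement G b z + 2 * l2dist G z y"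
        and "displacement G b z \<le> displacement G b y + 2 * l2dist G y z"
        using displacement_le_add_dist assms y z by blast+
      then show "dist (displacement G b y) (displacement G b z) < \<epsilon>"
        using z l2dist_commute[of G y z] by (auto simp: dist_real_def abs_diff_less_iff)
    qed (use \<open>\<epsilon> > 0\<close> in simp)
  qed simp
  then show ?thesis by simp
qed

section \<open>Lower bound for displacements from K\<close>

lemma ex_displacement_ge_Kreg:
  fixes u :: "nat \<Rightarrow> real"
  assumes S: "finite S" "S \<noteq> {}" and \<alpha>: "0 \<le> \<alpha>" "\<alpha> \<le> Kreg G L S"
    and u: "\<forall>x. x \<notin> L \<longrightarrow> u x = 0" "(\<lambda>x. (u x)\<^sup>2) summable_on L"
  shows "\<exists>s\<in>S. \<alpha>\<^sup>2 * (\<Sum>\<^sub>\<infinity>x\<in>L. (u x)\<^sup>2) \<le> (\<Sum>\<^sub>\<infinity>x\<in>L. (u (inv\<^bsub>G\<^esub> s \<otimes>\<^bsub>G\<^esub> x) - u x)\<^sup>2)"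
proof (cases "\<exists>x\<in>L. u x \<noteq> 0")
  case False
  then have "(\<Sum>\<^sub>\<infinity>x\<in>L. (u x)\<^sup>2) = 0" by (simp add: infsum_0)
  moreover obtain s where "s \<in> S" using S by blast
  moreover have "0 \<le> (\<Sum>\<^sub>\<infinity>x\<in>L. (u (inv\<^bsub>G\<^esub> s \<otimes>\<^bsub>G\<^esub> x) - u x)\<^sup>2)"
    by (intro infsum_nonneg) auto
  ultimately show ?thesis by auto
next
  case True
  then obtain x0 where x0: "x0 \<in> L" "u x0 \<noteq> 0" by blast
  define N where "N = (\<Sum>\<^sub>\<infinity>x\<in>L. (u x)\<^sup>2)"
  define D where "D s = (\<Sum>\<^sub>\<infinity>x\<in>L. (u (inv\<^bsub>G\<^esub> s \<otimes>\<^bsub>G\<^esub> x) - u x)\<^sup>2)" for s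
  let ?ratio = "\<lambda>v s. sqrt (\<Sum>\<^sub>\<infinity>x\<in>L. (v (inv\<^bsub>G\<^esub> s \<otimes>\<^bsub>G\<^esub> x) - v x)\<^sup>2) / sqrt (\<Sum>\<^sub>\<infinity>x\<in>L. (v x)\<^sup>2)"
  let ?Q = "{Max (?ratio v ` S) | v. (\<forall>x. x \<notin> L \<longrightarrow> v x = 0) \<and> (\<lambda>x. (v x)\<^sup>2) summable_on L
                                      \<and> (\<exists>x\<in>L. v x \<noteq> 0)}"
  have "(u x0)\<^sup>2 \<le> N"
    using finite_sum_le_infsum[OF u(2), of "{x0}"] x0 unfolding N_def by simp
  moreover have "0 < (u x0)\<^sup>2" using x0(2) by simp
  ultimately have N_pos: "N > 0" by linarith
  have "Max (?ratio u ` S) \<in> ?Q" using u True by blast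
  moreover have "bdd_below ?Q"
  proof (rule bdd_belowI[where m=0], clarify)
    fix v :: "nat \<Rightarrow> real"
    obtain s where "s \<in> S" using S by blast
    then have "?ratio v s \<le> Max (?ratio v ` S)" using S by (intro Max_ge) auto
    moreover have "0 \<le> ?ratio v s"
      by (intro divide_nonneg_nonneg real_sqrt_ge_zero infsum_nonneg) auto
    ultimately show "0 \<le> Max (?ratio v ` S)" by linarith
  qed
  ultimately have "Kreg G L S \<le> Max (?ratio u ` S)"
    unfolding Kreg_def by (rule cInf_lower)
  moreover have "Max (?ratio u ` S) \<in> ?ratio u ` S" using S by (intro Max_in) auto
  ultimately obtain s where s: "s \<in> S" "\<alpha> \<le> sqrt (D s) / sqrt N"
    using \<alpha> unfolding D_def N_def by force
  then have "\<alpha> * sqrt N \<le> sqrt (D s)" using N_pos by (simp add: pos_le_divide_eq)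
  then have "(\<alpha> * sqrt N)\<^sup>2 \<le> (sqrt (D s))\<^sup>2" by (rule power_mono) (use \<alpha> N_pos in simp)
  moreover have "0 \<le> D s" unfolding D_def by (intro infsum_nonneg) auto
  ultimately have "\<alpha>\<^sup>2 * N \<le> D s" using N_pos by (simp add: power_mult_distrib)
  then show ?thesis using s(1) unfolding N_def D_def by blast
qed

lemma infsum_rcoset:
  fixes F :: "nat \<Rightarrow> real"
  assumes "group G" "subgroup L G" "c \<in> carrier G"
  shows "infsum F (L #>\<^bsub>G\<^esub> c) = (\<Sum>\<^sub>\<infinity>l\<in>L. F (l \<otimes>\<^bsub>G\<^esub> c))"
    and "F summable_on L #>\<^bsub>G\<^esub> c \<longleftrightarrow> (\<lambda>l. F (l \<otimes>\<^bsub>G\<^esub> c)) summable_on L"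
proof -
  interpret group G by fact
  have L: "L \<subseteq> carrier G" using subgroup.subset[OF assms(2)] .
  have bij: "bij_betw (\<lambda>l. l \<otimes>\<^bsub>G\<^esub> c) L (L #>\<^bsub>G\<^esub> c)"
  proof (rule bij_betw_imageI)
    show "inj_on (\<lambda>l. l \<otimes>\<^bsub>G\<^esub> c) L"
      using L assms(3) right_cancel by (intro inj_onI) (meson subsetD)
    show "(\<lambda>l. l \<otimes>\<^bsub>G\<^esub> c) ` L = L #>\<^bsub>G\<^esub> c" unfolding r_coset_def by auto
  qed
  show "infsum F (L #>\<^bsub>G\<^esub> c) = (\<Sum>\<^sub>\<infinity>l\<in>L. F (l \<otimes>\<^bsub>G\<^esub> c))"
    using infsum_reindex_bij_betw[OF bij, of F] by simp
  show "F summable_on L #>\<^bsub>G\<^esub> c \<longleftrightarrow> (\<lambda>l. F (l \<otimes>\<^bsub>G\<^esub> c)) summable_on L"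
    using summable_on_reindex_bij_betw[OF bij, of F] by simp
qed

lemma rcoset_displacement_ge:
  fixes f :: "nat \<Rightarrow> real"
  assumes G: "group G" "subgroup L G" "c \<in> carrier G" and ab: "a \<in> L" "b \<in> L"
    and \<alpha>: "0 \<le> \<alpha>" "\<alpha> \<le> Kreg G L {a, b}" and f: "(\<lambda>g. (f g)\<^sup>2) summable_on L #>\<^bsub>G\<^esub> c"
  shows "\<alpha>\<^sup>2 * (\<Sum>\<^sub>\<infinity>g\<in>L #>\<^bsub>G\<^esub> c. (f g)\<^sup>2)
           \<le> (\<Sum>\<^sub>\<infinity>g\<in>L #>\<^bsub>G\<^esub> c. (f (inv\<^bsub>G\<^esub> a \<otimes>\<^bsub>G\<^esub> g) - f g)\<^sup>2)
             + (\<Sum>\<^sub>\<infinity>g\<in>L #>\<^bsub>G\<^esub> c. (f (inv\<^bsub>G\<^esub> b \<otimes>\<^bsub>G\<^esub> g) - f g)\<^sup>2)"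
proof -
  interpret group G by fact
  have L: "L \<subseteq> carrier G" using subgroup.subset[OF G(2)] .
  define u where "u l = (if l \<in> L then f (l \<otimes>\<^bsub>G\<^esub> c) else 0)" for l
  define D where "D s = (\<Sum>\<^sub>\<infinity>l\<in>L. (u (inv\<^bsub>G\<^esub> s \<otimes>\<^bsub>G\<^esub> l) - u l)\<^sup>2)" for s
  have norm: "(\<Sum>\<^sub>\<infinity>g\<in>L #>\<^bsub>G\<^esub> c. (f g)\<^sup>2) = (\<Sum>\<^sub>\<infinity>l\<in>L. (u l)\<^sup>2)"
    unfolding infsum_rcoset(1)[OF G] u_def by (intro infsum_cong) simp
  have "(\<lambda>l. (u l)\<^sup>2) summable_on L"
    using f unfolding infsum_rcoset(2)[OF G] u_def by (rule summable_on_cong[THEN iffD1, rotated]) simp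
  then obtain s where s: "s \<in> {a, b}" "\<alpha>\<^sup>2 * (\<Sum>\<^sub>\<infinity>l\<in>L. (u l)\<^sup>2) \<le> D s"
    using ex_displacement_ge_Kreg[OF _ _ \<alpha>, of u] unfolding D_def u_def by auto
  have coset_sum: "(\<Sum>\<^sub>\<infinity>g\<in>L #>\<^bsub>G\<^esub> c. (f (inv\<^bsub>G\<^esub> s \<otimes>\<^bsub>G\<^esub> g) - f g)\<^sup>2) = D s"
    if "s \<in> L" for s
    unfolding infsum_rcoset(1)[OF G] D_def
  proof (intro infsum_cong)
    fix l assume l: "l \<in> L"
    have "inv\<^bsub>G\<^esub> s \<otimes>\<^bsub>G\<^esub> l \<in> L"
      using that l G(2) by (simp add: subgroup.m_closed subgroup.m_inv_closed)
    moreover have "inv\<^bsub>G\<^esub> s \<otimes>\<^bsub>G\<^esub> (l \<otimes>\<^bsub>G\<^esub> c) = (inv\<^bsub>G\<^esub> s \<otimes>\<^bsub>G\<^esub> l) \<otimes>\<^bsub>G\<^esub> c"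
      using that l L G(3) by (simp add: m_assoc subsetD)
    ultimately show "(f (inv\<^bsub>G\<^esub> s \<otimes>\<^bsub>G\<^esub> (l \<otimes>\<^bsub>G\<^esub> c)) - f (l \<otimes>\<^bsub>G\<^esub> c))\<^sup>2
        = (u (inv\<^bsub>G\<^esub> s \<otimes>\<^bsub>G\<^esub> l) - u l)\<^sup>2"
      using l by (simp add: u_def)
  qed
  have "0 \<le> D s" for s unfolding D_def by (intro infsum_nonneg) auto
  then have "D s \<le> D a + D b" using s(1) by (auto simp: add_increasing add_increasing2)
  then show ?thesis using s(2) norm coset_sum ab by simp
qed

lemma regular_displacement_ge:
  fixes f :: "nat \<Rightarrow> real"
  assumes G: "group G" "subgroup L G" and ab: "a \<in> L" "b \<in> L"
    and \<alpha>: "0 \<le> \<alpha>" "\<alpha> \<le> Kreg G L {a, b}" and f: "(\<lambda>g. (f g)\<^sup>2) summable_on carrier G"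
  shows "\<alpha>\<^sup>2 * (\<Sum>\<^sub>\<infinity>g\<in>carrier G. (f g)\<^sup>2)
           \<le> (\<Sum>\<^sub>\<infinity>g\<in>carrier G. (f (inv\<^bsub>G\<^esub> a \<otimes>\<^bsub>G\<^esub> g) - f g)\<^sup>2)
             + (\<Sum>\<^sub>\<infinity>g\<in>carrier G. (f (inv\<^bsub>G\<^esub> b \<otimes>\<^bsub>G\<^esub> g) - f g)\<^sup>2)"
proof -
  interpret group G by fact
  define Da where "Da g = (f (inv\<^bsub>G\<^esub> a \<otimes>\<^bsub>G\<^esub> g) - f g)\<^sup>2" for g
  define Db where "Db g = (f (inv\<^bsub>G\<^esub> b \<otimes>\<^bsub>G\<^esub> g) - f g)\<^sup>2" for g
  have "(\<lambda>g. (f (inv\<^bsub>G\<^esub> s \<otimes>\<^bsub>G\<^esub> g))\<^sup>2) summable_on carrier G" if "s \<in> L" for s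
    using summable_on_reindex_bij_betw[OF bij_betw_left_mult, of G "inv\<^bsub>G\<^esub> s" "\<lambda>g. (f g)\<^sup>2"]
      f that subgroup.subset[OF G(2)] by auto
  then have sum_ab: "Da summable_on carrier G" "Db summable_on carrier G"
    unfolding Da_def Db_def using ab f by (auto intro: summable_on_square_diff)
  then have sum_sum: "(\<lambda>g. Da g + Db g) summable_on carrier G"
    by (intro summable_on_add)
  have cover: "\<Union>(rcosets\<^bsub>G\<^esub> L) = carrier G" and disj: "pairwise disjnt (rcosets\<^bsub>G\<^esub> L)"
    using rcosets_part_G[OF G(2)] rcos_disjoint[OF G(2)] by auto
  have "\<alpha>\<^sup>2 * (\<Sum>\<^sub>\<infinity>g\<in>carrier G. (f g)\<^sup>2) = (\<Sum>\<^sub>\<infinity>C\<in>rcosets\<^bsub>G\<^esub> L. \<alpha>\<^sup>2 * (\<Sum>\<^sub>\<infinity>g\<in>C. (f g)\<^sup>2))"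
    unfolding infsum_partition(1)[OF f cover disj] by (rule infsum_cmult_right'[symmetric])
  also have "\<dots> \<le> (\<Sum>\<^sub>\<infinity>C\<in>rcosets\<^bsub>G\<^esub> L. \<Sum>\<^sub>\<infinity>g\<in>C. Da g + Db g)"
  proof (rule infsum_mono)
    show "(\<lambda>C. \<alpha>\<^sup>2 * (\<Sum>\<^sub>\<infinity>g\<in>C. (f g)\<^sup>2)) summable_on rcosets\<^bsub>G\<^esub> L"
      using infsum_partition(2)[OF f cover disj] by (rule summable_on_cmult_right)
    show "(\<lambda>C. \<Sum>\<^sub>\<infinity>g\<in>C. Da g + Db g) summable_on rcosets\<^bsub>G\<^esub> L"
      using infsum_partition(2)[OF sum_sum cover disj] .
    fix C assume C: "C \<in> rcosets\<^bsub>G\<^esub> L"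
    then obtain c where c: "c \<in> carrier G" "C = L #>\<^bsub>G\<^esub> c" unfolding RCOSETS_def by auto
    have "C \<subseteq> carrier G" using C cover by blast
    then have "(\<lambda>g. (f g)\<^sup>2) summable_on C" "Da summable_on C" "Db summable_on C"
      using f sum_ab by (auto intro: summable_on_subset_banach)
    then have "(\<Sum>\<^sub>\<infinity>g\<in>C. Da g + Db g) = infsum Da C + infsum Db C"
      by (intro infsum_add)
    moreover have "\<alpha>\<^sup>2 * (\<Sum>\<^sub>\<infinity>g\<in>C. (f g)\<^sup>2) \<le> infsum Da C + infsum Db C"
      using rcoset_displacement_ge[OF G c(1) ab \<alpha>] \<open>(\<lambda>g. (f g)\<^sup>2) summable_on C\<close> c(2)
      unfolding Da_def Db_def by simp
    ultimately show "\<alpha>\<^sup>2 * (\<Sum>\<^sub>\<infinity>g\<in>C. (f g)\<^sup>2) \<le> (\<Sum>\<^sub>\<infinity>g\<in>C. Da g + Db g)"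
      by simp
  qed
  also have "\<dots> = (\<Sum>\<^sub>\<infinity>g\<in>carrier G. Da g + Db g)"
    using infsum_partition(1)[OF sum_sum cover disj] by simp
  also have "\<dots> = infsum Da (carrier G) + infsum Db (carrier G)"
    using infsum_add[OF sum_ab] .
  finally show ?thesis unfolding Da_def Db_def .
qed

lemma L2_displacement_ge:
  assumes G: "group G" "subgroup L G" and ab: "a \<in> L" "b \<in> L"
    and \<alpha>: "0 \<le> \<alpha>" "\<alpha> \<le> Kreg G L {a, b}" and x: "x \<in> L2 G"
  shows "\<alpha>\<^sup>2 * (l2norm G x)\<^sup>2 \<le> (displacement G a x)\<^sup>2 + (displacement G b x)\<^sup>2"
proof -
  define D where "D s = (\<lambda>(g, n). (x (inv\<^bsub>G\<^esub> s \<otimes>\<^bsub>G\<^esub> g) n - x g n)\<^sup>2)" for s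
  have sum_x: "(\<lambda>(g, n). (x g n)\<^sup>2) summable_on carrier G \<times> UNIV"
    using x unfolding L2_def by simp
  have norm: "(l2norm G x)\<^sup>2 = (\<Sum>\<^sub>\<infinity>(g, n)\<in>carrier G \<times> UNIV. (x g n)\<^sup>2)"
    unfolding l2norm_def by (simp add: infsum_nonneg case_prod_unfold)
  have disp: "(displacement G s x)\<^sup>2 = infsum (D s) (carrier G \<times> UNIV)"
    and sum_D: "D s summable_on carrier G \<times> UNIV" if "s \<in> carrier G" for s
  proof -
    have eq: "(\<lambda>(g, n). (act G s x g n - x g n)\<^sup>2) z = D s z" if "z \<in> carrier G \<times> UNIV" for z
      using that by (auto simp: D_def act_apply)
    have "(displacement G s x)\<^sup>2 = (\<Sum>\<^sub>\<infinity>(g, n)\<in>carrier G \<times> UNIV. (act G s x g n - x g n)\<^sup>2)"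
      unfolding l2dist_def by (simp add: infsum_nonneg case_prod_unfold power2_commute)
    then show "(displacement G s x)\<^sup>2 = infsum (D s) (carrier G \<times> UNIV)"
      using infsum_cong[OF eq] by simp
    show "D s summable_on carrier G \<times> UNIV"
      using summable_on_L2_diff[OF act_in_L2[OF G(1) that x] x]
      by (rule summable_on_cong[THEN iffD1, rotated]) (use eq in blast)
  qed
  have aG: "a \<in> carrier G" "b \<in> carrier G" using ab subgroup.subset[OF G(2)] by auto
  have "\<alpha>\<^sup>2 * (l2norm G x)\<^sup>2 = (\<Sum>\<^sub>\<infinity>n\<in>UNIV. \<alpha>\<^sup>2 * (\<Sum>\<^sub>\<infinity>g\<in>carrier G. (x g n)\<^sup>2))"
    unfolding norm infsum_Times_iterated(1)[OF sum_x] by (simp add: infsum_cmult_right')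
  also have "\<dots> \<le> (\<Sum>\<^sub>\<infinity>n\<in>UNIV. (\<Sum>\<^sub>\<infinity>g\<in>carrier G. D a (g, n)) + (\<Sum>\<^sub>\<infinity>g\<in>carrier G. D b (g, n)))"
  proof (rule infsum_mono)
    show "(\<lambda>n. \<alpha>\<^sup>2 * (\<Sum>\<^sub>\<infinity>g\<in>carrier G. (x g n)\<^sup>2)) summable_on UNIV"
      using infsum_Times_iterated(2)[OF sum_x] by (intro summable_on_cmult_right) simp
    show "(\<lambda>n. (\<Sum>\<^sub>\<infinity>g\<in>carrier G. D a (g, n)) + (\<Sum>\<^sub>\<infinity>g\<in>carrier G. D b (g, n))) summable_on UNIV"
      using aG by (intro summable_on_add infsum_Times_iterated(2) sum_D)
    fix n
    show "\<alpha>\<^sup>2 * (\<Sum>\<^sub>\<infinity>g\<in>carrier G. (x g n)\<^sup>2)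
        \<le> (\<Sum>\<^sub>\<infinity>g\<in>carrier G. D a (g, n)) + (\<Sum>\<^sub>\<infinity>g\<in>carrier G. D b (g, n))"
      using regular_displacement_ge[OF G ab \<alpha>, of "\<lambda>g. x g n"]
        infsum_Times_iterated(3)[OF sum_x, of n] by (simp add: D_def)
  qed
  also have "\<dots> = infsum (D a) (carrier G \<times> UNIV) + infsum (D b) (carrier G \<times> UNIV)"
    using aG by (simp add: infsum_add infsum_Times_iterated sum_D)
  finally show ?thesis using disp aG by simp
qed

lemma displacements_not_both_small:
  assumes G: "group G" "subgroup H G" and HE: "H \<in> E" and K: "K_local_ge G E \<alpha>" and \<alpha>: "0 < \<alpha>"
    and a: "a \<in> H - {\<one>\<^bsub>G\<^esub>}" and b: "b \<in> carrier G - H" and y: "y \<in> SphStar G"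
    and small: "displacement G a y < \<alpha> / 2"
  shows "\<alpha> / 2 \<le> displacement G b y"
proof (rule ccontr)
  assume "\<not> \<alpha> / 2 \<le> displacement G b y"
  then have small_sq: "(displacement G a y)\<^sup>2 < \<alpha>\<^sup>2 / 4" "(displacement G b y)\<^sup>2 < \<alpha>\<^sup>2 / 4"
    using small power_strict_mono[of _ "\<alpha> / 2" 2] by (auto simp: l2dist_nonneg power_divide)
  interpret group G by fact
  have aG: "a \<in> carrier G" using a subgroup.subset[OF G(2)] by auto
  let ?L = "generate G {a, b}"
  have "subgroup ?L G" using aG b by (intro generate_is_subgroup) auto
  moreover have "a \<in> ?L" "b \<in> ?L" by (auto intro: generate.incl)
  moreover have "\<alpha> \<le> Kreg G ?L {a, b}" using K HE a b unfolding K_local_ge_def by blast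
  moreover have "y \<in> L2 G" "l2norm G y = 1" using y unfolding SphStar_def Sph_def by auto
  ultimately have "\<alpha>\<^sup>2 \<le> (displacement G a y)\<^sup>2 + (displacement G b y)\<^sup>2"
    using L2_displacement_ge[OF G(1), of ?L a b \<alpha> y] \<alpha> by simp
  moreover have "0 < \<alpha>\<^sup>2" using \<alpha> by simp
  ultimately show False using small_sq by linarith
qed

section \<open>Paths in the thin part\<close>

lemma displacement_conj:
  assumes "group G" "\<beta> \<in> carrier G" "g \<in> carrier G"
  shows "displacement G (\<beta> \<otimes>\<^bsub>G\<^esub> g \<otimes>\<^bsub>G\<^esub> inv\<^bsub>G\<^esub> \<beta>) (act G \<beta> x) = displacement G g x"
proof -
  interpret group G by fact
  have "act G (\<beta> \<otimes>\<^bsub>G\<^esub> g \<otimes>\<^bsub>G\<^esub> inv\<^bsub>G\<^esub> \<beta>) (act G \<beta> x) = act G \<beta> (act G g x)"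
    using assms by (simp add: act_act m_assoc)
  then show ?thesis using l2dist_act assms by simp
qed

lemma conj_eq_one_imp:
  assumes "group G" "\<beta> \<in> carrier G" "g \<in> carrier G" "\<beta> \<otimes>\<^bsub>G\<^esub> g \<otimes>\<^bsub>G\<^esub> inv\<^bsub>G\<^esub> \<beta> = \<one>\<^bsub>G\<^esub>"
  shows "g = \<one>\<^bsub>G\<^esub>"
proof -
  interpret group G by fact
  have "\<beta> \<otimes>\<^bsub>G\<^esub> g = \<beta>"
    by (metis assms(2-4) inv_closed inv_inv l_inv_ex inv_equality m_closed)
  then show ?thesis using assms(2,3) by simp
qed

lemma SphStar_subset_L2: "SphStar G \<subseteq> L2 G"
  unfolding SphStar_def Sph_def by auto

lemma thin_imp_short_displacement:
  assumes G: "group G" and y: "y \<in> SphStar G" and thin: "orb G y \<in> thin G \<delta>"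
  shows "\<exists>b\<in>carrier G - {\<one>\<^bsub>G\<^esub>}. displacement G b y \<le> \<delta>"
proof -
  interpret group G by fact
  obtain x g where g: "g \<in> carrier G - {\<one>\<^bsub>G\<^esub>}" and short: "displacement G g x \<le> \<delta>"
    and same_orbit: "orb G y = orb G x"
    using thin unfolding thin_def by auto
  have "y \<in> orb G y"
    unfolding orb_def using act_one[OF G] y SphStar_subset_L2 by force
  then obtain \<beta> where \<beta>: "\<beta> \<in> carrier G" and y_eq: "y = act G \<beta> x"
    using same_orbit unfolding orb_def by auto
  have "\<beta> \<otimes>\<^bsub>G\<^esub> g \<otimes>\<^bsub>G\<^esub> inv\<^bsub>G\<^esub> \<beta> \<in> carrier G - {\<one>\<^bsub>G\<^esub>}"
    using g \<beta> conj_eq_one_imp[OF G \<beta>, of g] by auto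
  moreover have "displacement G (\<beta> \<otimes>\<^bsub>G\<^esub> g \<otimes>\<^bsub>G\<^esub> inv\<^bsub>G\<^esub> \<beta>) y \<le> \<delta>"
    using displacement_conj[OF G \<beta>, of g x] g short y_eq by simp
  ultimately show ?thesis by blast
qed

lemma pathin_STop_in_SphStar:
  assumes "pathin (STop G) q" "t \<in> {0..1}"
  shows "q t \<in> SphStar G"
proof -
  interpret Metric_space "SphStar G" "l2dist G" using Metric_space_l2dist[OF SphStar_subset_L2] .
  show ?thesis using assms continuous_map_image_subset_topspace unfolding pathin_def STop_def by fastforce
qed

lemma path_keeps_short_displacement:
  assumes G: "group G" "subgroup H G" and HE: "H \<in> E" and K: "K_local_ge G E \<alpha>" and \<alpha>: "0 < \<alpha>"
    and q: "pathin (STop G) q"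
    and thin: "\<forall>t\<in>{0..1}. \<exists>b\<in>carrier G - {\<one>\<^bsub>G\<^esub>}. displacement G b (q t) \<le> \<alpha> / 4"
    and a: "a \<in> H - {\<one>\<^bsub>G\<^esub>}" "displacement G a (q 0) < \<alpha> / 2"
  shows "\<exists>a'\<in>H - {\<one>\<^bsub>G\<^esub>}. displacement G a' (q 1) < \<alpha> / 2"
proof -
  define small where "small b = {t \<in> {0..1}. displacement G b (q t) < \<alpha> / 2}" for b
  have open_small: "openin (top_of_set {0..1}) (small b)" if "b \<in> carrier G" for b
  proof -
    have "continuous_map (top_of_set {0..1}) euclideanreal (\<lambda>t. displacement G b (q t))"
      using continuous_map_compose[OF q[unfolded pathin_def STop_def]
          continuous_map_displacement[OF G(1) that SphStar_subset_L2]]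
      by (simp add: o_def)
    from openin_continuous_map_preimage[OF this, of "{..<\<alpha> / 2}"]
    show ?thesis unfolding small_def by simp
  qed
  define T where "T = (\<Union>a\<in>H - {\<one>\<^bsub>G\<^esub>}. small a)"
  define U where "U = (\<Union>b\<in>carrier G - H. small b)"
  have "openin (top_of_set {0..1}) T"
    unfolding T_def using open_small subgroup.subset[OF G(2)] by (intro openin_Union) blast
  moreover have "openin (top_of_set {0..1}) U"
    unfolding U_def using open_small by (intro openin_Union) blast
  moreover have cover: "{0..1} \<subseteq> T \<union> U"
  proof
    fix t :: real assume t: "t \<in> {0..1}"
    then obtain b where b: "b \<in> carrier G - {\<one>\<^bsub>G\<^esub>}" "displacement G b (q t) \<le> \<alpha> / 4"
      using thin by blast
    then have "t \<in> small b" using t \<alpha> unfolding small_def by auto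
    then show "t \<in> T \<union> U" unfolding T_def U_def using b(1) by (cases "b \<in> H") auto
  qed
  moreover have "T \<inter> U = {}"
    using displacements_not_both_small[OF G HE K \<alpha>] pathin_STop_in_SphStar[OF q]
    unfolding T_def U_def small_def by fastforce
  moreover have "0 \<in> T" using a unfolding T_def small_def by auto
  ultimately have "U = {}"
    using connected_openin[of "{0..1::real}"] connected_Icc by blast
  then have "1 \<in> T" using cover by auto
  then show ?thesis unfolding T_def small_def by auto
qed

lemma path_lift_endpoint_in_subgroup:
  assumes G: "group G" "subgroup H G" "malnormal G H" and HE: "H \<in> E"
    and K: "K_local_ge G E \<alpha>" and \<alpha>: "0 < \<alpha>"
    and \<gamma>0: "\<gamma>0 \<in> H - {\<one>\<^bsub>G\<^esub>}" "displacement G \<gamma>0 x0 \<le> \<alpha> / 4"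
    and q: "pathin (STop G) q" "q 0 = x0" "\<forall>t\<in>{0..1}. orb G (q t) \<in> thin G (\<alpha> / 4)"
    and \<gamma>: "\<gamma> \<in> carrier G" "q 1 = act G \<gamma> x0"
  shows "\<gamma> \<in> H"
proof (rule ccontr)
  assume "\<gamma> \<notin> H"
  interpret group G by fact
  have \<gamma>0_G: "\<gamma>0 \<in> carrier G" using \<gamma>0(1) subgroup.subset[OF G(2)] by auto
  have "\<forall>t\<in>{0..1}. \<exists>b\<in>carrier G - {\<one>\<^bsub>G\<^esub>}. displacement G b (q t) \<le> \<alpha> / 4"
    using thin_imp_short_displacement[OF G(1)] pathin_STop_in_SphStar[OF q(1)] q(3) by blast
  moreover have "displacement G \<gamma>0 (q 0) < \<alpha> / 2" using \<gamma>0(2) q(2) \<alpha> by simp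
  ultimately obtain a where a: "a \<in> H - {\<one>\<^bsub>G\<^esub>}" "displacement G a (q 1) < \<alpha> / 2"
    using path_keeps_short_displacement[OF G(1,2) HE K \<alpha> q(1) _ \<gamma>0(1)] by blast
  define \<gamma>1 where "\<gamma>1 = \<gamma> \<otimes>\<^bsub>G\<^esub> \<gamma>0 \<otimes>\<^bsub>G\<^esub> inv\<^bsub>G\<^esub> \<gamma>"
  have "\<gamma>1 \<in> carrier G - {\<one>\<^bsub>G\<^esub>}"
    using conj_eq_one_imp[OF G(1) \<gamma>(1) \<gamma>0_G] \<gamma>0(1) \<gamma>(1) \<gamma>0_G unfolding \<gamma>1_def by auto
  moreover have "displacement G \<gamma>1 (q 1) < \<alpha> / 2"
    using displacement_conj[OF G(1) \<gamma>(1) \<gamma>0_G] \<gamma>0(2) \<gamma>(2) \<alpha> unfolding \<gamma>1_def by simp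
  moreover have "q 1 \<in> SphStar G" using pathin_STop_in_SphStar[OF q(1)] by simp
  ultimately have "\<gamma>1 \<in> H"
    using displacements_not_both_small[OF G(1,2) HE K \<alpha> a(1)] a(2) by fastforce
  moreover have "\<gamma>1 \<in> {\<gamma> \<otimes>\<^bsub>G\<^esub> h \<otimes>\<^bsub>G\<^esub> inv\<^bsub>G\<^esub> \<gamma> | h. h \<in> H}" using \<gamma>0(1) unfolding \<gamma>1_def by blast
  ultimately have "\<gamma>1 = \<one>\<^bsub>G\<^esub>"
    using G(3) \<gamma>(1) \<open>\<gamma> \<notin> H\<close> unfolding malnormal_def by blast
  then show False using \<open>\<gamma>1 \<in> carrier G - {\<one>\<^bsub>G\<^esub>}\<close> by simp
qed

lemma loops_in_thin_component_lift_into_subgroup: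
  assumes \<alpha>: "0 < \<alpha>" and G: "group G" "\<forall>H\<in>E. subgroup H G \<and> malnormal G H"
    and E: "covering G E" "K_local_ge G E \<alpha>"
    and R: "R \<in> path_components_of (subtopology (QTop G) (thin G (\<alpha> / 4)))" "r0 \<in> R"
    and x0: "x0 \<in> SphStar G" "orb G x0 = r0"
  shows "\<exists>H\<in>E. \<forall>p q \<gamma>.
           pathin (subtopology (QTop G) R) p \<and> p 0 = r0 \<and> p 1 = r0
           \<and> pathin (STop G) q \<and> (\<forall>t\<in>{0..1}. orb G (q t) = p t) \<and> q 0 = x0
           \<and> \<gamma> \<in> carrier G \<and> q 1 = act G \<gamma> x0
           \<longrightarrow> \<gamma> \<in> H"
proof -
  have R_thin: "R \<subseteq> thin G (\<alpha> / 4)"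
    using path_components_of_subset[OF R(1)] by simp
  obtain \<gamma>0 where \<gamma>0: "\<gamma>0 \<in> carrier G - {\<one>\<^bsub>G\<^esub>}" "displacement G \<gamma>0 x0 \<le> \<alpha> / 4"
    using thin_imp_short_displacement[OF G(1) x0(1)] R(2) R_thin x0(2) by blast
  then obtain H where H: "H \<in> E" "\<gamma>0 \<in> H" using E(1) unfolding covering_def by blast
  have "\<gamma> \<in> H"
    if p: "pathin (subtopology (QTop G) R) p"
      and q: "pathin (STop G) q" "\<forall>t\<in>{0..1}. orb G (q t) = p t" "q 0 = x0" and \<gamma>: "\<gamma> \<in> carrier G" "q 1 = act G \<gamma> x0" for p q \<gamma>
  proof -
    have "p t \<in> R" if "t \<in> {0..1}" for t
      using continuous_map_image_subset_topspace[OF p[unfolded pathin_def]] that by auto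
    then have "\<forall>t\<in>{0..1}. orb G (q t) \<in> thin G (\<alpha> / 4)" using q(2) R_thin by auto
    moreover have "subgroup H G" "malnormal G H" using G(2) H(1) by auto
    moreover have "\<gamma>0 \<in> H - {\<one>\<^bsub>G\<^esub>}" using \<gamma>0(1) H(2) by blast
    ultimately show ?thesis
      using path_lift_endpoint_in_subgroup[OF G(1) _ _ H(1) E(2) \<alpha> _ \<gamma>0(2) q(1,3) _ \<gamma>] by blast
  qed
  then show ?thesis using H(1) by blast
qed

theorem lemma6p3:
  shows "\<forall>\<alpha>::real. \<alpha> > 0 \<longrightarrow> (\<exists>\<delta>::real. \<delta> > 0 \<and>
    (\<forall>(G::nat monoid) E.
       group G \<and> (\<forall>H\<in>E. subgroup H G \<and> malnormal G H) \<and> covering G E \<and> K_local_ge G E \<alpha>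
       \<longrightarrow> (\<forall>R r0. R \<in> path_components_of (subtopology (QTop G) (thin G \<delta>)) \<and> r0 \<in> R
            \<longrightarrow> (\<forall>x0\<in>SphStar G. orb G x0 = r0
                 \<longrightarrow> (\<exists>H\<in>E. \<forall>p q \<gamma>.
                        pathin (subtopology (QTop G) R) p \<and> p 0 = r0 \<and> p 1 = r0
                        \<and> pathin (STop G) q \<and> (\<forall>t\<in>{0..1}. orb G (q t) = p t) \<and> q 0 = x0
                        \<and> \<gamma> \<in> carrier G \<and> q 1 = act G \<gamma> x0
                        \<longrightarrow> \<gamma> \<in> H)))))"
proof (intro allI impI ballI exI conjI)
  show "0 < \<alpha> / 4" if "0 < \<alpha>" for \<alpha> :: real
    using that by simp
qed (elim conjE, rule loops_in_thin_component_lift_into_subgroup, assumption+)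

end
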